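(* Consider $n\ge2$ agents in $\mathbb{R}^d$ ($d\ge2$) with undirected graph $\mathcal{G}=(\mathcal{V},\mathcal{E})$, constant desired bearings $\{g_{ij}^*\}_{(i,j)\in\mathcal{E}}$, leaders $\mathcal{V}_\ell=\{1,\dots,n_\ell\}$ with positions $p_i(t)$, $\dot p_i=v_i^*$, and followers $\mathcal{V}_f=\{n_\ell+1,\dots,n\}$, and suppose the standing assumption below holds. Let $p^*(t)$ be the target formation, so that $p_\ell^*(t)=p_\ell(t)$ and $p_f^*(t)=-\mathcal{L}_{ff}^{-1}\mathcal{L}_{f\ell}p_\ell(t)$, and assume $p_i^*(t)\ne c(p^*(t))$ for all $i$. Suppose the velocity of each leader is constant and satisfies $$v_i^*=\alpha_i\frac{p_i^*(t)-c(p^*(t))}{\|p_i^*(t)-c(p^*(t))\|},\quad i\in\mathcal{V}_\ell,$$ where the $\alpha_i\in\mathbb{R}$ are constants such that $\alpha_i/\|p_i^*(t)-c(p^*(t))\|=\alpha_j/\|p_j^*(t)-c(p^*(t))\|=:k(t)$ for all $i,j\in\mathcal{V}_\ell$ and all $t$. For followers $i\in\mathcal{V}_f$ set $\alpha_i:=k(t)\|p_i^*(t)-c(p^*(t))\|$. Then $\dot c(p^*(t))\equiv 0$ and $\dot s(p^*(t))\equiv \mathrm{sgn}(\alpha_i)\sqrt{\frac1n\sum_{i\in\mathcal{V}}\alpha_i^2}$, where $\mathrm{sgn}(\alpha_i)$ denotes the common sign of the leaders' $\alpha_i$.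
   Context: $P_x=I_d-\frac{xx^T}{\|x\|^2}$. The bearing Laplacian $\mathcal{L}\in\mathbb{R}^{dn\times dn}$ has $(i,j)$-th $d\times d$ block $0$ if $i\ne j,(i,j)\notin\mathcal{E}$; $-P_{g_{ij}^*}$ if $i\ne j,(i,j)\in\mathcal{E}$; $\sum_{k\in\mathcal{N}_i}P_{g_{ik}^*}$ if $i=j$; partitioned into leader/follower blocks $\mathcal{L}_{\ell\ell},\mathcal{L}_{\ell f},\mathcal{L}_{f\ell},\mathcal{L}_{ff}$. Target formation: $p^*(t)\in\mathbb{R}^{dn}$ with $p_i^*(t)=p_i(t)$ for leaders and $(p_j^*-p_i^* )/\|p_j^*-p_i^*\|=g_{ij}^*$ for all edges. Infinitesimal bearing rigidity of $q$: with $g_k=(q_j-q_i)/\|q_j-q_i\|$ for the $k$-th oriented edge, $F_B(q)=[g_1^T,\dots,g_m^T]^T$, $R_B=\partial F_B/\partial q$, require $\mathrm{Null}(R_B(q))=\mathrm{span}\{\mathbf{1}_n\otimes I_d,q\}$. Standing assumption: the target formation exists for all $t$, is infinitesimally bearing rigid, and $n_\ell\ge2$; then $\mathcal{L}_{ff}$ is positive definite. Centroid and scale of $q\in\mathbb{R}^{dn}$: $c(q)=\frac1n\sum_{i=1}^n q_i$, $s(q)=\sqrt{\frac1n\sum_{i=1}^n\|q_i-c(q)\|^2}$. *)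

theory Defs
  imports "HOL-Analysis.Analysis"
begin

text \<open>Agents are indexed by 1..n; configurations are maps nat => real^'d
 (only the values on 1..n matter).\<close>

definition agents :: "nat \<Rightarrow> nat set" where
  "agents n = {1..n}"

definition leaders :: "nat \<Rightarrow> nat set" where
  "leaders nl = {1..nl}"

definition followers :: "nat \<Rightarrow> nat \<Rightarrow> nat set" where
  "followers n nl = {nl+1..n}"

definition proj_orth :: "real^'d \<Rightarrow> real^'d^'d" where
  "proj_orth x = mat 1 - (1 / (norm x)\<^sup>2) *\<^sub>R (\<chi> a b. x $ a * x $ b)"

definition bearing_laplacian ::
  "(nat \<times> nat) set \<Rightarrow> (nat \<Rightarrow> nat \<Rightarrow> real^'d) \<Rightarrow> nat \<Rightarrow> nat \<Rightarrow> real^'d^'d" where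
  "bearing_laplacian E g i j =
     (if i = j then (\<Sum>k\<in>{k. (i,k) \<in> E}. proj_orth (g i k))
      else if (i,j) \<in> E then - proj_orth (g i j) else 0)"

definition Lff_pos_def ::
  "nat \<Rightarrow> nat \<Rightarrow> (nat \<times> nat) set \<Rightarrow> (nat \<Rightarrow> nat \<Rightarrow> real^'d) \<Rightarrow> bool" where
  "Lff_pos_def n nl E g \<longleftrightarrow>
     (\<forall>x :: nat \<Rightarrow> real^'d. (\<exists>i\<in>followers n nl. x i \<noteq> 0) \<longrightarrow>
        (\<Sum>i\<in>followers n nl. \<Sum>j\<in>followers n nl.
            x i \<bullet> (bearing_laplacian E g i j *v x j)) > 0)"

definition bearing :: "(nat \<Rightarrow> real^'d) \<Rightarrow> nat \<Rightarrow> nat \<Rightarrow> real^'d" where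
  "bearing q i j = (1 / norm (q j - q i)) *\<^sub>R (q j - q i)"

text \<open>Infinitesimal bearing rigidity: Null(R_B(q)) = span{1_n (x) I_d, q}.
 R_B(q) applied to delta is the directional derivative of F_B at q in direction
 delta, whose blocks are the derivatives of the edge bearings.\<close>
definition inf_bearing_rigid :: "nat \<Rightarrow> (nat \<times> nat) set \<Rightarrow> (nat \<Rightarrow> real^'d) \<Rightarrow> bool" where
  "inf_bearing_rigid n E q \<longleftrightarrow>
     (\<forall>\<delta> :: nat \<Rightarrow> real^'d.
        (\<forall>(i,j)\<in>E. ((\<lambda>\<epsilon>::real. bearing (\<lambda>k. q k + \<epsilon> *\<^sub>R \<delta> k) i j)
                        has_vector_derivative 0) (at 0))
        \<longleftrightarrow> (\<exists>a :: real^'d. \<exists>b :: real. \<forall>i\<in>agents n. \<delta> i = a + b *\<^sub>R q i))"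

definition target_formation ::
  "nat \<Rightarrow> (nat \<times> nat) set \<Rightarrow> (nat \<Rightarrow> nat \<Rightarrow> real^'d) \<Rightarrow> (nat \<Rightarrow> real^'d) \<Rightarrow> (nat \<Rightarrow> real^'d) \<Rightarrow> bool" where
  "target_formation nl E g pl q \<longleftrightarrow>
     (\<forall>i\<in>leaders nl. q i = pl i) \<and>
     (\<forall>(i,j)\<in>E. (1 / norm (q j - q i)) *\<^sub>R (q j - q i) = g i j)"

definition centroid :: "nat \<Rightarrow> (nat \<Rightarrow> real^'d) \<Rightarrow> real^'d" where
  "centroid n q = (1 / real n) *\<^sub>R (\<Sum>i\<in>agents n. q i)"

definition fscale :: "nat \<Rightarrow> (nat \<Rightarrow> real^'d) \<Rightarrow> real" where
  "fscale n q = sqrt ((1 / real n) * (\<Sum>i\<in>agents n. (norm (q i - centroid n q))\<^sup>2))"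

end

theory Submission
  imports Defs
begin

text \<open>Since \<open>L_ff\<close> is positive definite, the target formation is uniquely determined by the
  leader positions. Bearings are invariant under dilation with a positive factor, and the leader
  velocities \<open>v_i = k (p_i^* - c)\<close> are exactly those of the dilation of the current target
  formation about its centroid \<open>c\<close> by the factor \<open>1 + k (\<tau> - t)\<close>. Hence near \<open>t\<close> the target
  formation is this dilation: its centroid stays at \<open>c\<close> and its scale is
  \<open>(1 + k (\<tau> - t)) s\<close>, whose derivative \<open>k s\<close> equals \<open>sgn k \<surd>(mean \<alpha>\<^sub>i\<^sup>2)\<close> because
  \<open>\<alpha>\<^sub>i = k \<parallel>p_i^* - c\<parallel>\<close> for every agent.\<close>

lemma proj_orth_mult_vec: "proj_orth x *v y = y - ((x \<bullet> y) / (norm x)\<^sup>2) *\<^sub>R x"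
proof -
  have "(\<chi> a b. x $ a * x $ b) *v y = (x \<bullet> y) *\<^sub>R x"
    by (simp add: vec_eq_iff matrix_vector_mult_def inner_vec_def sum_distrib_left algebra_simps)
  then show ?thesis
    by (simp add: proj_orth_def matrix_vector_mult_diff_rdistrib scaleR_matrix_vector_assoc[symmetric])
qed

lemma has_vector_derivative_constant_affine:
  fixes f :: "real \<Rightarrow> 'a::real_normed_vector"
  assumes "convex S" "\<And>t. t \<in> S \<Longrightarrow> (f has_vector_derivative v) (at t within S)" "s \<in> S" "t \<in> S"
  shows "f t = f s + (t - s) *\<^sub>R v"
proof -
  have "\<And>t. t \<in> S \<Longrightarrow> ((\<lambda>t. f t - t *\<^sub>R v) has_vector_derivative 0) (at t within S)"
    using assms(2) by (auto intro!: derivative_eq_intros)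
  then obtain c where "\<And>t. t \<in> S \<Longrightarrow> f t - t *\<^sub>R v = c"
    using has_vector_derivative_zero_constant[OF assms(1)] by blast
  from this[OF assms(3)] this[OF assms(4)] show ?thesis by (simp add: algebra_simps)
qed

lemma sum_matrix_vector_mult: "sum A S *v (x::real^'n) = (\<Sum>a\<in>S. A a *v x)"
  by (induction S rule: infinite_finite_induct) (auto simp: matrix_vector_mult_add_rdistrib)

lemma uminus_matrix_vector_mult: "(- A) *v x = - (A *v x)" for A :: "'a::ring_1^'n^'m"
  using matrix_vector_mult_diff_rdistrib[of 0 A x] by simp

lemma proj_orth_mult_vec_parallel: "proj_orth x *v (c *\<^sub>R x) = 0"
  by (cases "x = 0") (simp_all add: proj_orth_mult_vec power2_norm_eq_inner)

lemma proj_orth_mult_vec_bearing: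
  assumes "(1 / norm d) *\<^sub>R d = g"
  shows "proj_orth g *v d = 0"
proof (cases "d = 0")
  case False
  then have "d = norm d *\<^sub>R g" using assms by auto
  then show ?thesis by (metis proj_orth_mult_vec_parallel)
qed simp

lemma bearing_laplacian_row_mult_vec:
  assumes "finite A" "i \<in> A" "{k. (i,k) \<in> E} \<subseteq> A" "(i,i) \<notin> E"
  shows "(\<Sum>j\<in>A. bearing_laplacian E g i j *v x j)
           = (\<Sum>k\<in>{k. (i,k) \<in> E}. proj_orth (g i k) *v (x i - x k))"
proof -
  let ?N = "{k. (i,k) \<in> E}"
  have "(\<Sum>j\<in>A. bearing_laplacian E g i j *v x j)
        = (\<Sum>j\<in>A. if j = i then (\<Sum>k\<in>?N. proj_orth (g i k)) *v x i else 0)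
          - (\<Sum>j\<in>A. if j \<in> ?N then proj_orth (g i j) *v x j else 0)"
    using assms(4)
    by (simp add: sum_subtractf[symmetric]) (rule sum.cong; simp add: bearing_laplacian_def uminus_matrix_vector_mult)
  also have "\<dots> = (\<Sum>k\<in>?N. proj_orth (g i k)) *v x i - (\<Sum>k\<in>?N. proj_orth (g i k) *v x k)"
    using assms(1-3) by (simp add: sum.inter_filter[symmetric]) (intro sum.cong; auto)
  also have "\<dots> = (\<Sum>k\<in>?N. proj_orth (g i k) *v (x i - x k))"
    by (simp add: sum_matrix_vector_mult sum_subtractf matrix_vector_mult_diff_distrib)
  finally show ?thesis .
qed

lemma target_formation_unique:
  assumes E_agents: "E \<subseteq> agents n \<times> agents n"
    and irrefl: "\<forall>i. (i,i) \<notin> E"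
    and nl_le: "nl \<le> n"
    and Lff_pd: "Lff_pos_def n nl E g"
    and q: "target_formation nl E g pl q"
    and q': "target_formation nl E g pl q'"
  shows "\<forall>i\<in>agents n. q i = q' i"
proof -
  let ?F = "followers n nl"
  have agents_split: "agents n = leaders nl \<union> ?F" and "?F \<subseteq> agents n"
    using nl_le by (auto simp: agents_def leaders_def followers_def)
  have leaders_eq: "q j = q' j" if "j \<in> leaders nl" for j
    using q q' that by (simp add: target_formation_def)
  define x where "x j = (if j \<in> ?F then q j - q' j else 0)" for j
  have x_agents: "x j = q j - q' j" if "j \<in> agents n" for j
    using that agents_split leaders_eq by (auto simp: x_def)
  have row: "(\<Sum>j\<in>?F. bearing_laplacian E g i j *v x j) = 0" if "i \<in> ?F" for i
  proof -
    have i: "i \<in> agents n" using that \<open>?F \<subseteq> agents n\<close> by blast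
    have nbrs: "{k. (i,k) \<in> E} \<subseteq> agents n" using E_agents by blast
    have edge: "proj_orth (g i k) *v (x i - x k) = 0" if "(i,k) \<in> E" for k
    proof -
      have "x i - x k = (q' k - q' i) - (q k - q i)"
        using x_agents i nbrs that by auto
      moreover have "proj_orth (g i k) *v (r k - r i) = 0" if "target_formation nl E g pl r" for r
        using that \<open>(i,k) \<in> E\<close> by (intro proj_orth_mult_vec_bearing) (auto simp: target_formation_def)
      ultimately show ?thesis
        using q q' by (simp add: matrix_vector_mult_diff_distrib)
    qed
    have "(\<Sum>j\<in>?F. bearing_laplacian E g i j *v x j) = (\<Sum>j\<in>agents n. bearing_laplacian E g i j *v x j)"
      using \<open>?F \<subseteq> agents n\<close> by (intro sum.mono_neutral_left) (auto simp: agents_def x_def)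
    also have "\<dots> = (\<Sum>k\<in>{k. (i,k) \<in> E}. proj_orth (g i k) *v (x i - x k))"
      using i nbrs irrefl by (intro bearing_laplacian_row_mult_vec) (auto simp: agents_def)
    also have "\<dots> = 0" using edge by simp
    finally show ?thesis .
  qed
  have "(\<Sum>i\<in>?F. \<Sum>j\<in>?F. x i \<bullet> (bearing_laplacian E g i j *v x j)) = 0"
    using row by (simp flip: inner_sum_right)
  then have "\<forall>i\<in>?F. x i = 0"
    using Lff_pd by (force simp: Lff_pos_def_def)
  then show ?thesis
    using agents_split leaders_eq x_agents by auto
qed

definition dilate :: "real^'d \<Rightarrow> real \<Rightarrow> (nat \<Rightarrow> real^'d) \<Rightarrow> nat \<Rightarrow> real^'d" where
  "dilate c s q i = c + s *\<^sub>R (q i - c)"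

lemma target_formation_dilate:
  assumes "target_formation nl E g pl q" "s > 0"
    and "\<forall>i\<in>leaders nl. pl' i = dilate c s q i"
  shows "target_formation nl E g pl' (dilate c s q)"
proof -
  have "dilate c s q j - dilate c s q i = s *\<^sub>R (q j - q i)" for i j
    by (simp add: dilate_def algebra_simps)
  then show ?thesis
    using assms by (auto simp: target_formation_def)
qed

lemma centroid_dilate:
  assumes "n > 0"
  shows "centroid n (dilate c s q) = c + s *\<^sub>R (centroid n q - c)"
proof -
  have "card (agents n) = n" by (simp add: agents_def)
  then show ?thesis
    using assms by (simp add: centroid_def dilate_def sum.distrib scaleR_sum_right[symmetric]
        sum_subtractf sum_constant_scaleR algebra_simps del: sum_constant)
qed

lemma fscale_dilate:
  assumes "n > 0"
  shows "fscale n (dilate c s q) = \<bar>s\<bar> * fscale n q"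
proof -
  have "dilate c s q i - centroid n (dilate c s q) = s *\<^sub>R (q i - centroid n q)" for i
    using assms by (simp add: centroid_dilate dilate_def algebra_simps)
  then show ?thesis
    by (simp add: fscale_def power_mult_distrib sum_distrib_left[symmetric])
      (metis real_sqrt_abs real_sqrt_mult times_divide_eq_right)
qed

lemma centroid_cong: "(\<And>i. i \<in> agents n \<Longrightarrow> q i = q' i) \<Longrightarrow> centroid n q = centroid n q'"
  by (simp add: centroid_def)

lemma fscale_cong: "(\<And>i. i \<in> agents n \<Longrightarrow> q i = q' i) \<Longrightarrow> fscale n q = fscale n q'"
  by (simp add: fscale_def centroid_cong[of n q q'])

lemma eventually_dilation_factor_pos: "\<forall>\<^sub>F \<tau> in nhds t. 1 + k * (\<tau> - t) > (0::real)"
proof -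
  have "open {\<tau>. 0 < 1 + k * (\<tau> - t)}"
    by (intro open_Collect_less continuous_intros)
  then show ?thesis
    using eventually_nhds_in_open[of "{\<tau>. 0 < 1 + k * (\<tau> - t)}" t] by simp
qed

lemma target_formation_eventually_dilate:
  assumes "E \<subseteq> agents n \<times> agents n" "\<forall>i. (i,i) \<notin> E" "nl \<le> n" "Lff_pos_def n nl E g"
    and target: "\<forall>\<tau>\<ge>0. target_formation nl E g (p \<tau>) (q \<tau>)"
    and leader_dyn: "\<And>\<tau> i. \<tau> \<ge> 0 \<Longrightarrow> i \<in> leaders nl \<Longrightarrow>
        ((\<lambda>\<tau>. p \<tau> i) has_vector_derivative k *\<^sub>R (q t i - c)) (at \<tau> within {0..})"
    and t: "t \<ge> 0"
  shows "\<forall>\<^sub>F \<tau> in nhds t. \<tau> \<in> {0..} \<longrightarrow>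
           (\<forall>i\<in>agents n. q \<tau> i = dilate c (1 + k * (\<tau> - t)) (q t) i)"
  using eventually_dilation_factor_pos[where t = t and k = k]
proof eventually_elim
  case (elim \<tau>)
  show ?case
  proof
    assume \<tau>: "\<tau> \<in> {0..}"
    have "p \<tau> i = dilate c (1 + k * (\<tau> - t)) (q t) i" if i: "i \<in> leaders nl" for i
    proof -
      have "p \<tau> i = p t i + (\<tau> - t) *\<^sub>R (k *\<^sub>R (q t i - c))"
        using leader_dyn i t \<tau> by (intro has_vector_derivative_constant_affine[of "{0..}"]) auto
      moreover have "p t i = q t i"
        using target t i by (simp add: target_formation_def)
      ultimately show ?thesis
        by (simp add: dilate_def algebra_simps)
    qed
    then have "target_formation nl E g (p \<tau>) (dilate c (1 + k * (\<tau> - t)) (q t))"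
      using target t elim by (intro target_formation_dilate) auto
    moreover have "target_formation nl E g (p \<tau>) (q \<tau>)"
      using target \<tau> by simp
    ultimately show "\<forall>i\<in>agents n. q \<tau> i = dilate c (1 + k * (\<tau> - t)) (q t) i"
      using target_formation_unique[OF assms(1-4)] by metis
  qed
qed

lemma dilating_formation_has_derivative:
  assumes "n > 0" "t \<in> S"
    and dilating: "\<forall>\<^sub>F \<tau> in nhds t. \<tau> \<in> S \<longrightarrow>
        (\<forall>i\<in>agents n. q \<tau> i = dilate (centroid n (q t)) (1 + k * (\<tau> - t)) (q t) i)"
  shows "((\<lambda>\<tau>. centroid n (q \<tau>)) has_vector_derivative 0) (at t within S)"
    and "((\<lambda>\<tau>. fscale n (q \<tau>)) has_real_derivative k * fscale n (q t)) (at t within S)"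
proof -
  have "\<forall>\<^sub>F \<tau> in nhds t. \<tau> \<in> S \<longrightarrow> centroid n (q \<tau>) = centroid n (q t)"
    using dilating
    by eventually_elim (auto simp: centroid_cong[of n _ "dilate _ _ _"] centroid_dilate assms(1))
  then show "((\<lambda>\<tau>. centroid n (q \<tau>)) has_vector_derivative 0) (at t within S)"
    using has_vector_derivative_cong_ev[where f = "\<lambda>\<tau>. centroid n (q \<tau>)" and g = "\<lambda>_. centroid n (q t)"]
    by auto
  have "\<forall>\<^sub>F \<tau> in nhds t. \<tau> \<in> S \<longrightarrow> fscale n (q \<tau>) = (1 + k * (\<tau> - t)) * fscale n (q t)"
    using dilating eventually_dilation_factor_pos[where t = t and k = k]
    by eventually_elim (auto simp: fscale_cong[of n _ "dilate _ _ _"] fscale_dilate assms(1))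
  then show "((\<lambda>\<tau>. fscale n (q \<tau>)) has_real_derivative k * fscale n (q t)) (at t within S)"
    by (subst has_field_derivative_cong_ev[OF refl _ refl refl \<open>t \<in> S\<close>])
      (auto intro!: derivative_eq_intros)
qed

lemma sgn_mult_sqrt_mean_square:
  assumes "\<And>i. i \<in> agents n \<Longrightarrow> a i = k * norm (q i - centroid n q)"
  shows "sgn k * sqrt (1 / real n * (\<Sum>i\<in>agents n. (a i)\<^sup>2)) = k * fscale n q"
proof -
  let ?X = "1 / real n * (\<Sum>i\<in>agents n. (norm (q i - centroid n q))\<^sup>2)"
  have "1 / real n * (\<Sum>i\<in>agents n. (a i)\<^sup>2) = k\<^sup>2 * ?X"
    using assms by (simp add: power_mult_distrib sum_distrib_left)
  then have "sqrt (1 / real n * (\<Sum>i\<in>agents n. (a i)\<^sup>2)) = \<bar>k\<bar> * fscale n q"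
    unfolding fscale_def by (metis real_sqrt_abs real_sqrt_mult)
  then show ?thesis
    by (simp add: mult.assoc[symmetric] sgn_mult_abs)
qed

theorem proposition2:
  fixes n nl :: nat
    and E :: "(nat \<times> nat) set"
    and g :: "nat \<Rightarrow> nat \<Rightarrow> real^'d"
    and p pstar :: "real \<Rightarrow> nat \<Rightarrow> real^'d"
    and v :: "nat \<Rightarrow> real^'d"
    and \<alpha> :: "nat \<Rightarrow> real"
  assumes d2: "CARD('d) \<ge> 2"
    and n2: "n \<ge> 2"
    and nl_le: "nl \<le> n"
    and graph_V: "E \<subseteq> agents n \<times> agents n"
    and graph_sym: "\<forall>i j. (i,j) \<in> E \<longrightarrow> (j,i) \<in> E"
    and graph_irrefl: "\<forall>i. (i,i) \<notin> E"
    and g_unit: "\<forall>(i,j)\<in>E. norm (g i j) = 1"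
    and leader_dyn: "\<forall>t\<ge>0. \<forall>i\<in>leaders nl.
                       ((\<lambda>\<tau>. p \<tau> i) has_vector_derivative v i) (at t within {0..})"
    and target: "\<forall>t\<ge>0. target_formation nl E g (p t) (pstar t)"
    and rigid: "\<forall>t\<ge>0. inf_bearing_rigid n E (pstar t)"
    and nl2: "nl \<ge> 2"
    and Lff_pd: "Lff_pos_def n nl E g"
    and not_centroid: "\<forall>t\<ge>0. \<forall>i\<in>agents n. pstar t i \<noteq> centroid n (pstar t)"
    and vel: "\<forall>t\<ge>0. \<forall>i\<in>leaders nl.
               v i = (\<alpha> i / norm (pstar t i - centroid n (pstar t))) *\<^sub>R
                     (pstar t i - centroid n (pstar t))"
    and common_k: "\<forall>t\<ge>0. \<forall>i\<in>leaders nl. \<forall>j\<in>leaders nl.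
               \<alpha> i / norm (pstar t i - centroid n (pstar t)) =
               \<alpha> j / norm (pstar t j - centroid n (pstar t))"
  shows "\<forall>t\<ge>0.
           ((\<lambda>\<tau>. centroid n (pstar \<tau>)) has_vector_derivative 0) (at t within {0..}) \<and>
           (let k = \<alpha> 1 / norm (pstar t 1 - centroid n (pstar t));
                \<alpha>t = (\<lambda>i. if i \<in> leaders nl then \<alpha> i
                           else k * norm (pstar t i - centroid n (pstar t)))
            in ((\<lambda>\<tau>. fscale n (pstar \<tau>)) has_real_derivative
                  sgn (\<alpha> 1) * sqrt ((1 / real n) * (\<Sum>i\<in>agents n. (\<alpha>t i)\<^sup>2)))
                 (at t within {0..}))"
proof (intro allI impI, goal_cases)
  case (1 t)
  then have t: "t \<ge> 0" .
  define c where "c = centroid n (pstar t)"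
  define k where "k = \<alpha> 1 / norm (pstar t 1 - c)"
  have leaders_agents: "leaders nl \<subseteq> agents n" and leader_1: "1 \<in> leaders nl"
    using nl_le nl2 by (auto simp: leaders_def agents_def)
  have k_eq: "\<alpha> i / norm (pstar t i - c) = k" if "i \<in> leaders nl" for i
    using common_k[rule_format, OF t that leader_1] by (simp add: c_def k_def)
  have ratio: "\<alpha> i = k * norm (pstar t i - c)" if "i \<in> leaders nl" for i
  proof -
    have "pstar t i \<noteq> c"
      using not_centroid t that leaders_agents by (auto simp: c_def)
    then show ?thesis using k_eq[OF that] by (simp add: field_simps)
  qed
  have vel_k: "v i = k *\<^sub>R (pstar t i - c)" if "i \<in> leaders nl" for i
    using vel[rule_format, OF t that] k_eq[OF that] by (simp add: c_def)
  have "\<forall>\<^sub>F \<tau> in nhds t. \<tau> \<in> {0..} \<longrightarrow>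
          (\<forall>i\<in>agents n. pstar \<tau> i = dilate c (1 + k * (\<tau> - t)) (pstar t) i)"
    using leader_dyn vel_k t
    by (intro target_formation_eventually_dilate[OF graph_V graph_irrefl nl_le Lff_pd target]) auto
  then have "((\<lambda>\<tau>. centroid n (pstar \<tau>)) has_vector_derivative 0) (at t within {0..})"
    and "((\<lambda>\<tau>. fscale n (pstar \<tau>)) has_real_derivative k * fscale n (pstar t)) (at t within {0..})"
    using dilating_formation_has_derivative[of n t "{0..}" pstar k] n2 t unfolding c_def by auto
  moreover have "sgn (\<alpha> 1) = sgn k"
    using ratio[OF leader_1] not_centroid t leader_1 leaders_agents by (auto simp: c_def sgn_mult)
  moreover have "sgn k * sqrt (1 / real n * (\<Sum>i\<in>agents n.
      (if i \<in> leaders nl then \<alpha> i else k * norm (pstar t i - c))\<^sup>2)) = k * fscale n (pstar t)"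
    using ratio by (intro sgn_mult_sqrt_mean_square) (simp add: c_def)
  ultimately show ?case
    unfolding Let_def c_def[symmetric] k_def[symmetric] by simp
qed

end
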